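(* Let $\mathbf{u}=(u_n)$ be an a-sequence such that $s_\mathbf{u}(\mathbb{T})$ is open in $(\mathbb{T},\tau_\mathbf{u})$. Then the sequence of ratios $(q_n)$ of $\mathbf{u}$ is bounded.
   Context: An a-sequence is a strictly increasing sequence of integers $\mathbf{u}=(u_n)_{n\in\mathbb{N}}$ with $u_n\mid u_{n+1}$ for all $n$; its ratios are $q_0=u_0$ and $q_n=u_n/u_{n-1}$ for $n>0$. $\mathbb{T}=\mathbb{R}/\mathbb{Z}$, $\|x\|$ is the distance from $x$ to the nearest integer, $d(x,y)=\|x-y\|$. $s_\mathbf{u}(\mathbb{T})=\{x\in\mathbb{T}: u_nx\to0\text{ in }\mathbb{T}\}$. $\tau_\mathbf{u}$ is the topology on $\mathbb{T}$ induced by the metric $\varrho_\mathbf{u}(x,y)=\sup_n\max\{d(x,y),d(u_nx,u_ny)\}$. *)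

theory Defs
  imports "HOL-Analysis.Analysis"
begin

text \<open>The circle group T = R/Z is represented by real representatives;
  all notions below are invariant under integer translation.\<close>

definition a_sequence :: "(nat \<Rightarrow> int) \<Rightarrow> bool" where
  "a_sequence u \<longleftrightarrow> strict_mono u \<and> (\<forall>n. u n dvd u (Suc n))"

definition ratio :: "(nat \<Rightarrow> int) \<Rightarrow> nat \<Rightarrow> int" where
  "ratio u n = (if n = 0 then u 0 else u n div u (n - 1))"

definition tnorm :: "real \<Rightarrow> real" where
  "tnorm x = \<bar>x - of_int (round x)\<bar>"

definition tdist :: "real \<Rightarrow> real \<Rightarrow> real" where
  "tdist x y = tnorm (x - y)"

definition s_u :: "(nat \<Rightarrow> int) \<Rightarrow> real set" where
  "s_u u = {x. (\<lambda>n. tnorm (of_int (u n) * x)) \<longlonglongrightarrow> 0}"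

definition rho_u :: "(nat \<Rightarrow> int) \<Rightarrow> real \<Rightarrow> real \<Rightarrow> real" where
  "rho_u u x y = (SUP n. max (tdist x y) (tdist (of_int (u n) * x) (of_int (u n) * y)))"

definition open_tau_u :: "(nat \<Rightarrow> int) \<Rightarrow> real set \<Rightarrow> bool" where
  "open_tau_u u S \<longleftrightarrow> (\<forall>x\<in>S. \<exists>e>0. \<forall>y. rho_u u x y < e \<longrightarrow> y \<in> S)"

end

theory Submission
  imports Defs
begin

text \<open>Let v n = u (n + 1) (u 0 may be negative) and q n = v (n + 1) / v n \<ge> 2. For small c > 0 consider the point
  y = \<Sum>k. \<lfloor>c q k\<rfloor> / v (k + 1). In v n * y the first n summands become integers, and the
  remaining tail T n = v n * \<Sum>k\<ge>n. \<lfloor>c q k\<rfloor> / v (k + 1) lies between c - 1 / q n and 2c.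
  So y is within 2c of 0 for rho_u; as 0 \<in> s_u and s_u is open, y \<in> s_u, i.e. T n \<rightarrow> 0,
  which forces q n < 2 / c for all large n.\<close>

lemma tnorm_le_dist_int: "tnorm x \<le> \<bar>x - of_int k\<bar>"
proof (cases "k = round x")
  case True
  then show ?thesis by (simp add: tnorm_def)
next
  case False
  then have "1 \<le> \<bar>k - round x\<bar>" by linarith
  then have "1 \<le> \<bar>of_int k - of_int (round x) :: real\<bar>" by linarith
  moreover have "\<bar>of_int (round x) - x\<bar> \<le> 1/2" by (rule of_int_round_abs_le)
  ultimately show ?thesis unfolding tnorm_def by linarith
qed

lemma tnorm_int_add:
  assumes "0 \<le> t" "t \<le> 1/2"
  shows "tnorm (of_int k + t) = t"
proof (rule antisym)
  show "tnorm (of_int k + t) \<le> t" using tnorm_le_dist_int[of "of_int k + t" k] assms by simp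
  define j where "j = round (of_int k + t) - k"
  have "tnorm (of_int k + t) = \<bar>t - of_int j\<bar>" unfolding tnorm_def j_def by simp
  moreover have "j \<le> 0 \<or> 1 \<le> j" by linarith
  then have "of_int j \<le> (0::real) \<or> (1::real) \<le> of_int j" by simp
  ultimately show "t \<le> tnorm (of_int k + t)" using assms by linarith
qed

lemma tnorm_minus: "tnorm (- x) = tnorm x"
  using tnorm_le_dist_int[of "-x" "- round x"] tnorm_le_dist_int[of x "- round (-x)"]
  by (simp add: tnorm_def)

lemma abs_mult_le_abs_mult_of_dvd:
  fixes a b :: int and x :: real
  assumes "a dvd b" "b \<noteq> 0"
  shows "\<bar>of_int a * x\<bar> \<le> \<bar>of_int b * x\<bar>"
proof -
  have "\<bar>a\<bar> \<le> \<bar>b\<bar>" using assms by (simp add: dvd_imp_le_int)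
  then have "\<bar>of_int a\<bar> \<le> (\<bar>of_int b\<bar> :: real)" by linarith
  then show ?thesis by (simp add: abs_mult mult_right_mono)
qed

lemma bounded_if_eventually_bounded:
  fixes f :: "nat \<Rightarrow> 'a::linorder"
  assumes "\<And>n. N \<le> n \<Longrightarrow> f n \<le> B"
  shows "\<exists>B. \<forall>n. f n \<le> B"
proof -
  have "f n \<le> max B (Max (f ` {..N}))" for n
    using assms[of n] by (cases "n \<le> N") (auto simp: le_max_iff_disj)
  then show ?thesis by blast
qed

lemma rho_u_zero_le:
  assumes "tnorm x \<le> r" "\<And>n. tnorm (of_int (u n) * x) \<le> r"
  shows "rho_u u 0 x \<le> r"
  unfolding rho_u_def tdist_def using assms by (intro cSUP_least) (auto simp: tnorm_minus)

lemma a_sequence_pos_Suc: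
  assumes "a_sequence u"
  shows "0 < u (Suc n)"
proof -
  have mono: "strict_mono u" and dvd: "\<And>n. u n dvd u (Suc n)"
    using assms unfolding a_sequence_def by auto
  have "0 < u 1"
  proof (rule ccontr)
    assume "\<not> 0 < u 1"
    moreover have "u 0 < u 1" "u 1 < u 2" using mono by (auto simp: strict_mono_def)
    moreover have "u 1 \<noteq> 0" using dvd[of 1] \<open>u 1 < u 2\<close> by (auto simp: numeral_2_eq_2)
    moreover have "\<bar>u 0\<bar> \<le> \<bar>u 1\<bar>" if "u 1 \<noteq> 0" using dvd[of 0] that by (simp add: dvd_imp_le_int)
    ultimately show False by linarith
  qed
  moreover have "u 1 \<le> u (Suc n)" using mono by (simp add: strict_mono_less_eq)
  ultimately show ?thesis by simp
qed

locale divisor_chain =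
  fixes v :: "nat \<Rightarrow> int"
  assumes pos: "0 < v n"
    and dvd_Suc: "v n dvd v (Suc n)"
    and less_Suc: "v n < v (Suc n)"
begin

definition q :: "nat \<Rightarrow> int" where
  "q n = v (Suc n) div v n"

lemma q_mult: "q n * v n = v (Suc n)"
  unfolding q_def using dvd_Suc by simp

lemma q_ge_2: "2 \<le> q n"
proof -
  have "1 * v n < q n * v n" using less_Suc q_mult by simp
  then show ?thesis using pos[of n] by (simp add: mult_less_cancel_right_pos)
qed

lemma dvd_mono: "k \<le> n \<Longrightarrow> v k dvd v n"
  by (induction n rule: dec_induct) (auto intro: dvd_trans dvd_Suc)

lemma power2_mult_le: "2 ^ j * v n \<le> v (n + j)"
proof (induction j)
  case (Suc j)
  have "2 ^ Suc j * v n \<le> 2 * v (n + j)" using Suc by simp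
  also have "\<dots> \<le> q (n + j) * v (n + j)" using q_ge_2 pos by (simp add: mult_right_mono)
  finally show ?case by (simp add: q_mult)
qed simp

end

lemma a_sequence_imp_divisor_chain:
  assumes "a_sequence u"
  shows "divisor_chain (\<lambda>n. u (Suc n))"
  using assms a_sequence_pos_Suc unfolding a_sequence_def divisor_chain_def strict_mono_def by auto

locale lacunary_construction = divisor_chain +
  fixes c :: real
  assumes c_pos: "0 < c"
begin

definition weight :: "nat \<Rightarrow> real" where
  "weight k = of_int \<lfloor>c * of_int (q k)\<rfloor> / of_int (v (Suc k))"

definition point :: real where
  "point = (\<Sum>k. weight k)"

definition tail :: "nat \<Rightarrow> real" where
  "tail n = (\<Sum>j. of_int (v n) * weight (j + n))"

lemma weight_nonneg: "0 \<le> weight k"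
  unfolding weight_def using c_pos q_ge_2[of k] pos[of "Suc k"] by simp

lemma weight_le: "weight k \<le> c / of_int (v k)"
proof -
  have "weight k \<le> c * of_int (q k) / of_int (v (Suc k))"
    unfolding weight_def using pos[of "Suc k"] by (simp add: divide_right_mono)
  also have "\<dots> = c / of_int (v k)"
    using q_ge_2[of k] pos[of k] by (simp flip: q_mult)
  finally show ?thesis .
qed

lemma scaled_weight_le: "of_int (v n) * weight (j + n) \<le> c * (1/2) ^ j"
proof -
  have "(2::real) ^ j * of_int (v n) \<le> of_int (v (j + n))"
    using power2_mult_le[of j n]
    by (metis add.commute of_int_le_iff of_int_mult of_int_numeral of_int_power)
  then have "c / of_int (v (j + n)) \<le> c / (2 ^ j * of_int (v n))"
    using c_pos pos[of n] pos[of "j + n"] by (intro divide_left_mono) auto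
  then have "of_int (v n) * weight (j + n) \<le> of_int (v n) * (c / (2 ^ j * of_int (v n)))"
    using weight_le[of "j + n"] pos[of n] by (intro mult_left_mono) auto
  also have "\<dots> = c * (1/2) ^ j" using pos[of n] by (simp add: power_one_over)
  finally show ?thesis .
qed

lemma geometric_c_sums: "(\<lambda>j. c * (1/2::real) ^ j) sums (2 * c)"
  using sums_mult[OF geometric_sums[of "1/2::real"], of c] by (simp add: mult.commute)

lemma summable_scaled_weight: "summable (\<lambda>j. of_int (v n) * weight (j + n))"
proof (rule summable_comparison_test)
  show "\<exists>N. \<forall>j\<ge>N. norm (of_int (v n) * weight (j + n)) \<le> c * (1/2) ^ j"
    using pos[of n] weight_nonneg scaled_weight_le by auto
  show "summable (\<lambda>j. c * (1/2::real) ^ j)"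
    using geometric_c_sums by (rule sums_summable)
qed

lemma summable_weight: "summable weight"
  using summable_scaled_weight[of 0] pos[of 0] summable_mult_D by auto

lemma tail_nonneg: "0 \<le> tail n"
  unfolding tail_def using pos[of n] weight_nonneg
  by (intro suminf_nonneg summable_scaled_weight) simp

lemma tail_le: "tail n \<le> 2 * c"
  unfolding tail_def using geometric_c_sums scaled_weight_le
  by (intro sums_le[OF _ summable_sums[OF summable_scaled_weight]]) auto

lemma tail_ge: "c - 1 / of_int (q n) \<le> tail n"
proof -
  have qr: "2 \<le> real_of_int (q n)" using q_ge_2[of n] by simp
  have "c - 1 / of_int (q n) = (c * of_int (q n) - 1) / of_int (q n)"
    using qr by (simp add: field_simps)
  also have "\<dots> \<le> of_int \<lfloor>c * of_int (q n)\<rfloor> / of_int (q n)"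
    using qr by (intro divide_right_mono) linarith+
  also have "\<dots> = of_int (v n) * weight (0 + n)"
    unfolding weight_def using pos[of n] qr by (simp add: field_simps flip: q_mult)
  also have "\<dots> \<le> tail n"
    unfolding tail_def using sum_le_suminf[OF summable_scaled_weight[of n], of "{0}"] pos[of n] weight_nonneg
    by simp
  finally show ?thesis .
qed

lemma scaled_point_eq: "\<exists>I. of_int (v n) * point = of_int I + tail n"
proof -
  have head: "of_int (v n) * weight k = of_int (\<lfloor>c * of_int (q k)\<rfloor> * (v n div v (Suc k)))"
    if "k < n" for k
    using dvd_mono[of "Suc k" n] that by (simp add: weight_def of_int_div)
  have "of_int (v n) * point = (\<Sum>k. of_int (v n) * weight k)"
    unfolding point_def using summable_weight by (simp add: suminf_mult)
  also have "\<dots> = tail n + (\<Sum>k<n. of_int (v n) * weight k)"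
    unfolding tail_def using summable_mult[OF summable_weight]
    by (subst suminf_split_initial_segment) auto
  also have "(\<Sum>k<n. of_int (v n) * weight k) = of_int (\<Sum>k<n. \<lfloor>c * of_int (q k)\<rfloor> * (v n div v (Suc k)))"
    using head by simp
  finally show ?thesis by (metis add.commute)
qed

lemma tnorm_scaled_point:
  assumes "c \<le> 1/4"
  shows "tnorm (of_int (v n) * point) = tail n"
proof -
  obtain I where "of_int (v n) * point = of_int I + tail n" using scaled_point_eq by blast
  then show ?thesis using tnorm_int_add tail_nonneg tail_le[of n] assms by simp
qed

lemma point_nonneg: "0 \<le> point"
  unfolding point_def by (intro suminf_nonneg summable_weight weight_nonneg)

lemma scaled_point_0: "of_int (v 0) * point = tail 0"
  unfolding point_def tail_def using summable_weight by (simp add: suminf_mult)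

lemma point_le: "point \<le> 2 * c"
proof -
  have "1 * point \<le> of_int (v 0) * point"
    using pos[of 0] point_nonneg by (intro mult_right_mono) auto
  then show ?thesis using scaled_point_0 tail_le[of 0] by simp
qed

lemma q_bounded_if_tail_tendsto_0:
  assumes "tail \<longlonglongrightarrow> 0"
  shows "\<exists>B. \<forall>n. q n \<le> B"
proof -
  obtain N where N: "\<And>n. N \<le> n \<Longrightarrow> tail n < c / 2"
    using order_tendstoD(2)[OF assms, of "c/2"] c_pos by (auto simp: eventually_sequentially)
  have "q n \<le> \<lceil>2 / c\<rceil>" if "N \<le> n" for n
  proof -
    have qr: "2 \<le> real_of_int (q n)" using q_ge_2[of n] by simp
    have "c / 2 < 1 / of_int (q n)" using tail_ge[of n] N[OF that] by linarith
    then have "of_int (q n) < 2 / c" using qr c_pos by (simp add: field_simps)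
    then show ?thesis by linarith
  qed
  then show ?thesis by (rule bounded_if_eventually_bounded)
qed

end


theorem mainTheorem9:
  fixes u :: "nat \<Rightarrow> int"
  assumes "a_sequence u"
    and "open_tau_u u (s_u u)"
  shows "\<exists>B. \<forall>n. \<bar>ratio u n\<bar> \<le> B"
proof -
  interpret divisor_chain "\<lambda>n. u (Suc n)"
    using assms(1) by (rule a_sequence_imp_divisor_chain)
  have "0 \<in> s_u u" by (simp add: s_u_def tnorm_def)
  then obtain e where "0 < e" and ball: "\<And>y. rho_u u 0 y < e \<Longrightarrow> y \<in> s_u u"
    using assms(2) unfolding open_tau_u_def by blast
  define c where "c = min (e / 3) (1 / 4)"
  have c: "0 < c" "c \<le> 1/4" "2 * c < e" using \<open>0 < e\<close> by (auto simp: c_def)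
  interpret lacunary_construction "\<lambda>n. u (Suc n)" c
    using c(1) by unfold_locales
  have "tnorm (of_int (u n) * point) \<le> 2 * c" for n
  proof (cases n)
    case 0
    have "u 0 dvd u 1" using assms(1) by (simp add: a_sequence_def)
    have "tnorm (of_int (u 0) * point) \<le> \<bar>of_int (u 0) * point\<bar>"
      using tnorm_le_dist_int[of _ 0] by simp
    also have "\<dots> \<le> \<bar>of_int (u 1) * point\<bar>"
      using abs_mult_le_abs_mult_of_dvd[OF \<open>u 0 dvd u 1\<close>] pos[of 0] by simp
    also have "\<dots> = tail 0" using scaled_point_0 tail_nonneg[of 0] by simp
    finally show ?thesis using 0 tail_le[of 0] by simp
  next
    case (Suc m)
    then show ?thesis using tnorm_scaled_point[OF c(2), of m] tail_le[of m] by simp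
  qed
  moreover have "tnorm point \<le> 2 * c"
    using tnorm_le_dist_int[of point 0] point_nonneg point_le by simp
  ultimately have "rho_u u 0 point \<le> 2 * c" by (intro rho_u_zero_le)
  then have "point \<in> s_u u" using ball c(3) by simp
  then have "(\<lambda>n. tnorm (of_int (u (Suc n)) * point)) \<longlonglongrightarrow> 0"
    unfolding s_u_def by (auto intro: LIMSEQ_Suc)
  then have "tail \<longlonglongrightarrow> 0" using tnorm_scaled_point[OF c(2)] by simp
  then obtain B where "\<And>n. q n \<le> B" using q_bounded_if_tail_tendsto_0 by blast
  then have "\<bar>ratio u n\<bar> \<le> B" if "2 \<le> n" for n
    using that q_ge_2[of "n - 2"] by (auto simp: ratio_def q_def numeral_2_eq_2 dest!: le_Suc_ex)
  then show ?thesis by (rule bounded_if_eventually_bounded)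
qed

end
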